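(* Let $q\ge3$ be a prime power, $s\in\mathbb{N}$ with $s\mid q-1$, $\Gamma$ the subgroup of $\mathbb{F}_q^*$ of order $\frac{q-1}{s}$, and $H\subset\mathbb{F}_q^*$ a set of $r$ elements lying in pairwise distinct cosets of $\Gamma$. Let $H\Gamma=\{h\gamma:h\in H,\gamma\in\Gamma\}$ and $E=\{x(1,y)\in\mathbb{F}_q^2: x,y\in H\Gamma\}$. If $$(q-1)^6r^6+(q-1)s^5q^5r-s^6(q^6+q^5)>0$$ and $\varpi\colon(\mathbb{F}_q^2)^{\otimes 3}\to\mathbb{F}_q$ is a ternary form non-degenerate in some coordinate, then $\mathbb{F}_q^*\subset\varpi(E^3)=\{\varpi(x,y,z):x,y,z\in E\}$.
   Context: A 3-linear form $\varpi$ on $\mathbb{F}_q^2$ is non-degenerate in coordinate $j$ if for every nonzero $y\in\mathbb{F}_q^2$ the bilinear map obtained by fixing the $j$-th argument equal to $y$ is not identically zero. $\mathbb{F}_q^*=\mathbb{F}_q\setminus\{0\}$. *)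

theory Defs
  imports Main "HOL-Library.Cardinality"
begin

definition vadd :: "'a::field \<times> 'a \<Rightarrow> 'a \<times> 'a \<Rightarrow> 'a \<times> 'a" where
  "vadd u v = (fst u + fst v, snd u + snd v)"

definition vsmul :: "'a::field \<Rightarrow> 'a \<times> 'a \<Rightarrow> 'a \<times> 'a" where
  "vsmul c u = (c * fst u, c * snd u)"

definition lin2 :: "('a::field \<times> 'a \<Rightarrow> 'a) \<Rightarrow> bool" where
  "lin2 f \<longleftrightarrow> (\<forall>u v. f (vadd u v) = f u + f v) \<and> (\<forall>c u. f (vsmul c u) = c * f u)"

definition trilinear :: "('a::field \<times> 'a \<Rightarrow> 'a \<times> 'a \<Rightarrow> 'a \<times> 'a \<Rightarrow> 'a) \<Rightarrow> bool" where
  "trilinear w \<longleftrightarrow>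
     (\<forall>y z. lin2 (\<lambda>x. w x y z)) \<and> (\<forall>x z. lin2 (\<lambda>y. w x y z)) \<and> (\<forall>x y. lin2 (\<lambda>z. w x y z))"

definition nondeg_coord :: "('a::field \<times> 'a \<Rightarrow> 'a \<times> 'a \<Rightarrow> 'a \<times> 'a \<Rightarrow> 'a) \<Rightarrow> nat \<Rightarrow> bool" where
  "nondeg_coord w j \<longleftrightarrow> (\<forall>y. y \<noteq> (0, 0) \<longrightarrow>
     (if j = 1 then (\<exists>u v. w y u v \<noteq> 0)
      else if j = 2 then (\<exists>u v. w u y v \<noteq> 0)
      else (\<exists>u v. w u v y \<noteq> 0)))"

definition mult_subgroup :: "'a::field set \<Rightarrow> bool" where
  "mult_subgroup G \<longleftrightarrow> 1 \<in> G \<and> 0 \<notin> G \<and> (\<forall>a\<in>G. \<forall>b\<in>G. a * b \<in> G) \<and> (\<forall>a\<in>G. inverse a \<in> G)"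

end

theory Submission
  imports Defs
begin

text \<open>The inequality forces \<open>2r > s\<close> (otherwise its two positive terms are at most
  \<open>q\<^sup>6s\<^sup>6/64\<close> and \<open>q\<^sup>6s\<^sup>6/2\<close>), i.e. \<open>|H\<Gamma>| = r(q - 1)/s > (q - 1)/2\<close>. Hence every
  \<open>c \<in> \<bbbF>\<^sub>q\<^sup>*\<close> is a product \<open>x\<^sub>1 x\<^sub>2\<close> of two elements of \<open>H\<Gamma>\<close>, since \<open>H\<Gamma>\<close> and \<open>c/H\<Gamma>\<close> cannot be
  disjoint in \<open>\<bbbF>\<^sub>q\<^sup>*\<close>. For distinct \<open>a, b \<in> H\<Gamma>\<close> the vectors \<open>(1,a), (1,b)\<close> form a basis, so the
  nonzero form \<open>\<varpi>\<close> takes a value \<open>f \<noteq> 0\<close> at some triple \<open>((1,y\<^sub>1),(1,y\<^sub>2),(1,y\<^sub>3))\<close> with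
  \<open>y\<^sub>i \<in> {a,b}\<close>. By trilinearity \<open>\<varpi>(x\<^sub>1(1,y\<^sub>1), x\<^sub>2(1,y\<^sub>2), a(1,y\<^sub>3)) = x\<^sub>1 x\<^sub>2 a f\<close>, which is \<open>c\<close>
  once \<open>x\<^sub>1 x\<^sub>2 = c/(a f)\<close>.\<close>

lemma lin2_eq_0_if_vanishes_at_pair:
  assumes "lin2 f" "(a::'a::field) \<noteq> b" "f (1, a) = 0" "f (1, b) = 0"
  shows "f u = 0"
proof -
  obtain u1 u2 where u: "u = (u1, u2)" by (cases u)
  define \<beta> where "\<beta> = (u2 - a * u1) / (b - a)"
  define \<alpha> where "\<alpha> = u1 - \<beta>"
  have "\<beta> * (b - a) = u2 - a * u1"
    unfolding \<beta>_def using assms(2) by simp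
  then have "\<alpha> * a + \<beta> * b = u2"
    unfolding \<alpha>_def by (simp add: algebra_simps)
  then have "u = vadd (vsmul \<alpha> (1, a)) (vsmul \<beta> (1, b))"
    by (simp add: u vadd_def vsmul_def \<alpha>_def)
  moreover have "f (vadd x y) = f x + f y" "f (vsmul c x) = c * f x" for x y c
    using assms(1) unfolding lin2_def by blast+
  ultimately have "f u = \<alpha> * f (1, a) + \<beta> * f (1, b)" by simp
  with assms show ?thesis by simp
qed

lemma trilinear_eq_0_if_vanishes_at_pair:
  assumes tri: "trilinear w" and ab: "(a::'a::field) \<noteq> b"
    and vanish: "\<And>y1 y2 y3. y1 \<in> {a, b} \<Longrightarrow> y2 \<in> {a, b} \<Longrightarrow> y3 \<in> {a, b} \<Longrightarrow>
                   w (1, y1) (1, y2) (1, y3) = 0"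
  shows "w u v t = 0"
proof -
  have lin: "lin2 (\<lambda>x. w x v t)" "lin2 (\<lambda>y. w u y t)" "lin2 (\<lambda>z. w u v z)" for u v t
    using tri unfolding trilinear_def by blast+
  have first: "w u (1, y2) (1, y3) = 0" if "y2 \<in> {a, b}" "y3 \<in> {a, b}" for u y2 y3
    by (rule lin2_eq_0_if_vanishes_at_pair[OF lin(1) ab]) (use vanish that in blast)+
  have second: "w u v (1, y3) = 0" if "y3 \<in> {a, b}" for u v y3
    by (rule lin2_eq_0_if_vanishes_at_pair[OF lin(2) ab]) (use first that in blast)+
  show ?thesis
    by (rule lin2_eq_0_if_vanishes_at_pair[OF lin(3) ab]) (use second in blast)+
qed

lemma trilinear_nonzero_at_pair:
  assumes "trilinear w" "(a::'a::field) \<noteq> b" "w u v t \<noteq> 0"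
  obtains y1 y2 y3 where "y1 \<in> {a, b}" "y2 \<in> {a, b}" "y3 \<in> {a, b}"
    "w (1, y1) (1, y2) (1, y3) \<noteq> 0"
proof -
  have "\<not> (\<forall>y1\<in>{a, b}. \<forall>y2\<in>{a, b}. \<forall>y3\<in>{a, b}. w (1, y1) (1, y2) (1, y3) = 0)"
    using trilinear_eq_0_if_vanishes_at_pair[OF assms(1,2)] assms(3) by metis
  with that show ?thesis by blast
qed

lemma trilinear_vsmul:
  assumes "trilinear w"
  shows "w (vsmul x1 p1) (vsmul x2 p2) (vsmul x3 p3) = x1 * x2 * x3 * w p1 p2 p3"
proof -
  have "w (vsmul c u) y z = c * w u y z" "w y (vsmul c u) z = c * w y u z"
    "w y z (vsmul c u) = c * w y z u" for c u y z
    using assms unfolding trilinear_def lin2_def by blast+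
  then show ?thesis by simp
qed

lemma nondeg_coord_imp_nonzero:
  assumes "nondeg_coord w j"
  obtains u v t where "w u v t \<noteq> (0::'a::field)"
proof -
  have "if j = 1 then \<exists>u v. w (1, 0) u v \<noteq> 0
    else if j = 2 then \<exists>u v. w u (1, 0) v \<noteq> 0
    else \<exists>u v. w u v (1, 0) \<noteq> 0"
    using spec[OF assms[unfolded nondeg_coord_def], of "(1, 0)"] by simp
  with that show ?thesis by (auto split: if_splits)
qed

lemma card_mult_cosets:
  fixes H \<Gamma> :: "'a::field set"
  assumes \<Gamma>: "mult_subgroup \<Gamma>" and H: "H \<subseteq> {x. x \<noteq> 0}"
    and distinct_cosets: "\<forall>h1\<in>H. \<forall>h2\<in>H. h1 \<noteq> h2 \<longrightarrow> h1 / h2 \<notin> \<Gamma>"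
  shows "card {h * g | h g. h \<in> H \<and> g \<in> \<Gamma>} = card H * card \<Gamma>"
proof -
  have "inj_on (\<lambda>(h, g). h * g) (H \<times> \<Gamma>)"
  proof (rule inj_onI, clarify)
    fix h1 g1 h2 g2
    assume in_sets: "h1 \<in> H" "g1 \<in> \<Gamma>" "h2 \<in> H" "g2 \<in> \<Gamma>" and eq: "h1 * g1 = h2 * g2"
    have nz: "h2 \<noteq> 0" "g1 \<noteq> 0"
      using in_sets H \<Gamma> unfolding mult_subgroup_def by auto
    have "h1 / h2 = g2 * inverse g1"
      using eq nz by (simp add: field_simps)
    moreover have "g2 * inverse g1 \<in> \<Gamma>"
      using \<Gamma> in_sets unfolding mult_subgroup_def by auto
    ultimately have "h1 = h2"
      using distinct_cosets in_sets by metis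
    with eq nz show "h1 = h2 \<and> g1 = g2" by simp
  qed
  moreover have "{h * g | h g. h \<in> H \<and> g \<in> \<Gamma>} = (\<lambda>(h, g). h * g) ` (H \<times> \<Gamma>)" by auto
  ultimately show ?thesis by (simp add: card_image card_cartesian_product)
qed

lemma card_nonzero: "card {x::'a::{field, finite}. x \<noteq> 0} = CARD('a) - 1"
proof -
  have "{x::'a. x \<noteq> 0} = UNIV - {0}" by auto
  then show ?thesis by (simp add: card_Diff_subset)
qed

lemma nonzero_eq_mult_if_card_gt_half:
  fixes A :: "'a::{field, finite} set"
  assumes A: "A \<subseteq> {x. x \<noteq> 0}" and big: "2 * card A > CARD('a) - 1" and c: "c \<noteq> 0"
  obtains x y where "x \<in> A" "y \<in> A" "c = x * y"
proof -
  have "A \<inter> (\<lambda>x. c / x) ` A \<noteq> {}"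
  proof
    assume disjoint: "A \<inter> (\<lambda>x. c / x) ` A = {}"
    have "inj_on (\<lambda>x. c / x) A"
      by (rule inj_onI) (use c A in \<open>auto simp: field_simps\<close>)
    with disjoint have "card (A \<union> (\<lambda>x. c / x) ` A) = 2 * card A"
      by (simp add: card_Un_disjoint card_image)
    moreover have "card (A \<union> (\<lambda>x. c / x) ` A) \<le> card {x::'a. x \<noteq> 0}"
      by (rule card_mono) (use A c in auto)
    ultimately show False using big card_nonzero[where 'a='a] by simp
  qed
  then obtain x y where "x \<in> A" "y \<in> A" "x = c / y" by blast
  moreover have "y \<noteq> 0" using \<open>y \<in> A\<close> A by auto
  ultimately show ?thesis using that by simp
qed

lemma sextic_pos_imp_double_gt:
  fixes Q S R :: int
  assumes "Q \<ge> 3" "S \<ge> 1" "R \<ge> 0"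
    and ineq: "(Q - 1)^6 * R^6 + (Q - 1) * S^5 * Q^5 * R - S^6 * (Q^6 + Q^5) > 0"
  shows "2 * R > S"
proof (rule ccontr)
  assume "\<not> 2 * R > S"
  then have le: "2 * R \<le> S" by simp
  have "(Q - 1)^6 \<le> Q^6" "(2 * R)^6 \<le> S^6"
    by (rule power_mono; use le assms in simp)+
  then have "(Q - 1)^6 * (2 * R)^6 \<le> Q^6 * S^6"
    by (rule mult_mono) (use assms in simp_all)
  moreover have "(Q - 1) * (S^5 * Q^5) * (2 * R) \<le> Q * (S^5 * Q^5) * S"
    by (rule mult_mono) (use assms le in \<open>auto intro: mult_mono\<close>)
  ultimately have "64 * ((Q - 1)^6 * R^6 + (Q - 1) * S^5 * Q^5 * R) \<le> 33 * (Q^6 * S^6)"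
    by (simp add: power_mult_distrib algebra_simps power_numeral_reduce)
  moreover have "Q^6 * S^6 > 0" "S^6 * Q^5 \<ge> 0" using assms by simp_all
  ultimately show False using ineq by (simp add: algebra_simps)
qed

lemma trilinear_image_contains_nonzero:
  fixes A :: "'a::field set"
  assumes tri: "trilinear w" and nonzero: "w u v t \<noteq> 0"
    and A: "A \<subseteq> {x. x \<noteq> 0}" "a \<in> A" "b \<in> A" "a \<noteq> b"
    and products: "\<And>c. c \<noteq> 0 \<Longrightarrow> \<exists>x\<in>A. \<exists>y\<in>A. c = x * y"
    and E: "\<And>x y. x \<in> A \<Longrightarrow> y \<in> A \<Longrightarrow> (x, x * y) \<in> E"
  shows "{c. c \<noteq> 0} \<subseteq> {w p1 p2 p3 | p1 p2 p3. p1 \<in> E \<and> p2 \<in> E \<and> p3 \<in> E}"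
proof
  fix c :: 'a
  assume "c \<in> {c. c \<noteq> 0}"
  obtain y1 y2 y3 where y: "y1 \<in> {a, b}" "y2 \<in> {a, b}" "y3 \<in> {a, b}"
    and "w (1, y1) (1, y2) (1, y3) \<noteq> 0"
    using trilinear_nonzero_at_pair[OF tri \<open>a \<noteq> b\<close> nonzero] .
  define f where "f = w (1, y1) (1, y2) (1, y3)"
  have "f \<noteq> 0" "a \<noteq> 0" using \<open>w (1, y1) (1, y2) (1, y3) \<noteq> 0\<close> A by (auto simp: f_def)
  with \<open>c \<in> {c. c \<noteq> 0}\<close> have "c / (f * a) \<noteq> 0" by simp
  then obtain x1 x2 where x: "x1 \<in> A" "x2 \<in> A" "c / (f * a) = x1 * x2"
    using products by blast
  have "w (x1, x1 * y1) (x2, x2 * y2) (a, a * y3)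
      = w (vsmul x1 (1, y1)) (vsmul x2 (1, y2)) (vsmul a (1, y3))"
    by (simp add: vsmul_def)
  also have "\<dots> = x1 * x2 * a * f"
    unfolding f_def by (rule trilinear_vsmul[OF tri])
  also have "\<dots> = c"
    using x(3) \<open>f \<noteq> 0\<close> \<open>a \<noteq> 0\<close> by (simp add: field_simps)
  finally show "c \<in> {w p1 p2 p3 | p1 p2 p3. p1 \<in> E \<and> p2 \<in> E \<and> p3 \<in> E}"
    using x y A E by blast
qed

theorem mainTheorem8:
  fixes \<Gamma> H :: "'a::{field, finite} set"
    and s r :: nat
    and w :: "'a \<times> 'a \<Rightarrow> 'a \<times> 'a \<Rightarrow> 'a \<times> 'a \<Rightarrow> 'a"
  assumes q3: "CARD('a) \<ge> 3"
    and sdvd: "s dvd (CARD('a) - 1)"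
    and Gsub: "mult_subgroup \<Gamma>"
    and Gcard: "card \<Gamma> = (CARD('a) - 1) div s"
    and Hsub: "H \<subseteq> {x. x \<noteq> 0}"
    and Hcard: "card H = r"
    and Hcos: "\<forall>h1\<in>H. \<forall>h2\<in>H. h1 \<noteq> h2 \<longrightarrow> h1 / h2 \<notin> \<Gamma>"
    and ineq: "(int CARD('a) - 1)^6 * (int r)^6 + (int CARD('a) - 1) * (int s)^5 * (int CARD('a))^5 * int r
               - (int s)^6 * ((int CARD('a))^6 + (int CARD('a))^5) > 0"
    and tri: "trilinear w"
    and nd: "\<exists>j\<in>{1,2,3}. nondeg_coord w j"
  shows "{c::'a. c \<noteq> 0} \<subseteq>
    (let HG = {h * g | h g. h \<in> H \<and> g \<in> \<Gamma>};
         E = {(x, x * y) | x y. x \<in> HG \<and> y \<in> HG}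
     in {w a b c | a b c. a \<in> E \<and> b \<in> E \<and> c \<in> E})"
proof -
  define HG where "HG = {h * g | h g. h \<in> H \<and> g \<in> \<Gamma>}"
  have "s > 0" using sdvd q3 by (cases "s = 0") auto
  then have "2 * int r > int s"
    by (intro sextic_pos_imp_double_gt[OF _ _ _ ineq]) (use q3 in auto)
  then have "2 * r > s" by linarith
  then have "2 * r * card \<Gamma> > s * card \<Gamma>"
    using Gsub by (auto simp: mult_subgroup_def card_gt_0_iff)
  moreover have "s * card \<Gamma> = CARD('a) - 1"
    using sdvd Gcard by simp
  moreover have "card HG = r * card \<Gamma>"
    using card_mult_cosets[OF Gsub Hsub Hcos] Hcard by (simp add: HG_def)
  ultimately have big: "2 * card HG > CARD('a) - 1"
    by (simp add: mult.assoc)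
  have HG_nonzero: "HG \<subseteq> {x. x \<noteq> 0}"
    using Hsub Gsub by (auto simp: HG_def mult_subgroup_def)
  from big q3 have "card HG \<ge> 2" by linarith
  then obtain a b where "a \<in> HG" "b \<in> HG" "a \<noteq> b"
    by (metis card_le_Suc_iff numeral_2_eq_2 insertCI)
  obtain u v t where "w u v t \<noteq> 0"
    using nd nondeg_coord_imp_nonzero by blast
  show ?thesis
    unfolding Let_def HG_def[symmetric]
    by (rule trilinear_image_contains_nonzero[OF tri \<open>w u v t \<noteq> 0\<close> HG_nonzero
          \<open>a \<in> HG\<close> \<open>b \<in> HG\<close> \<open>a \<noteq> b\<close>])
      (use nonzero_eq_mult_if_card_gt_half[OF HG_nonzero big] in metis, blast)
qed

end
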